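(* Let $n\geq 1$ and $0\leq k\leq n-1$ be integers such that $n$ divides $k^2+k+1$. Let $C$ be the $n\times n$ permutation matrix of a cyclic permutation of order $n$, and let $$N=\begin{bmatrix}I & I & I & 0\\ I & C & 0 & I\\ I & 0 & C^{k+1} & C^k\\ 0 & I & C^k & C^k\end{bmatrix}.$$ Then the bipartite graph $\Gamma$ on $8n$ vertices with adjacency matrix $\begin{bmatrix}0 & N\\ N^{\top} & 0\end{bmatrix}$ is arc-transitive, and $1$ and $-1$ are eigenvalues of $\Gamma$, each with multiplicity three.
   Context: A graph is arc-transitive if its automorphism group acts transitively on the ordered pairs of adjacent vertices. Here $I$ and $0$ denote the $n\times n$ identity and zero matrices. *)

theory Defs
  imports "Jordan_Normal_Form.Char_Poly"
begin

definition is_graph_aut :: "nat \<Rightarrow> (nat \<Rightarrow> nat \<Rightarrow> bool) \<Rightarrow> (nat \<Rightarrow> nat) \<Rightarrow> bool" where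
  "is_graph_aut m E f \<longleftrightarrow> bij_betw f {..<m} {..<m} \<and>
     (\<forall>u<m. \<forall>v<m. E u v \<longleftrightarrow> E (f u) (f v))"

definition arc_transitive :: "nat \<Rightarrow> (nat \<Rightarrow> nat \<Rightarrow> bool) \<Rightarrow> bool" where
  "arc_transitive m E \<longleftrightarrow>
     (\<forall>u v x y. u < m \<and> v < m \<and> x < m \<and> y < m \<and> E u v \<and> E x y \<longrightarrow>
        (\<exists>f. is_graph_aut m E f \<and> f u = x \<and> f v = y))"

definition mat_graph :: "real mat \<Rightarrow> nat \<Rightarrow> nat \<Rightarrow> bool" where
  "mat_graph A u v \<longleftrightarrow> A $$ (u, v) \<noteq> 0"

definition is_ncycle :: "nat \<Rightarrow> (nat \<Rightarrow> nat) \<Rightarrow> bool" where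
  "is_ncycle n \<sigma> \<longleftrightarrow> bij_betw \<sigma> {..<n} {..<n} \<and>
     (\<forall>i<n. \<forall>j<n. \<exists>m. (\<sigma> ^^ m) i = j)"

definition perm_mat :: "nat \<Rightarrow> (nat \<Rightarrow> nat) \<Rightarrow> real mat" where
  "perm_mat n \<sigma> = mat n n (\<lambda>(i, j). if \<sigma> i = j then 1 else 0)"

definition N_mat :: "nat \<Rightarrow> real mat \<Rightarrow> nat \<Rightarrow> real mat" where
  "N_mat n C k = (let I = 1\<^sub>m n; Z = 0\<^sub>m n n in
     four_block_mat
       (four_block_mat I I I C) (four_block_mat I Z Z I)
       (four_block_mat I Z Z I) (four_block_mat (C ^\<^sub>m (k+1)) (C ^\<^sub>m k) (C ^\<^sub>m k) (C ^\<^sub>m k)))"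

definition bip_adj :: "nat \<Rightarrow> real mat \<Rightarrow> real mat" where
  "bip_adj n N = four_block_mat (0\<^sub>m (4*n) (4*n)) N (transpose_mat N) (0\<^sub>m (4*n) (4*n))"

end

theory Submission
  imports Defs "Jordan_Normal_Form.Jordan_Normal_Form_Uniqueness"
    "Jordan_Normal_Form.Jordan_Normal_Form_Existence"
begin

text \<open>Numbering each block of n vertices by the discrete logarithm with respect to the n-cycle
turns \<open>\<Gamma>\<close> into a \<open>\<int>/n\<close>-cover of the cube \<open>Q\<^sub>3\<close> (\<open>K\<^sub>4\<^sub>,\<^sub>4\<close> minus a perfect matching), whose
voltages are the exponents of C in N. An automorphism of \<open>Q\<^sub>3\<close> that preserves the voltages up to
a unit r modulo n and a coboundary lifts to \<open>\<Gamma>\<close>. Since n divides \<open>k\<^sup>2 + k + 1\<close>, we have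
\<open>k\<^sup>3 \<equiv> 1\<close> modulo n; this lets the translations of \<open>Q\<^sub>3\<close> and a rotation about a vertex lift, so \<open>\<Gamma>\<close> is
arc-transitive.

For an eigenvalue \<open>\<lambda> = \<plusminus>1\<close>, applying A twice shows that each fibre of an eigenvector is
annihilated by a product of three shift-difference operators, with shifts 1, k and \<open>-1-k\<close>; all
three are units modulo n, so the eigenvector is constant on fibres, i.e. lifted from \<open>Q\<^sub>3\<close>, whose
\<open>\<plusminus>1\<close>-eigenspaces are 3-dimensional. Since A is symmetric, algebraic and geometric multiplicities
agree.\<close>

hide_const (open) Coset.order

lemma is_graph_aut_into: "is_graph_aut m E f \<Longrightarrow> u < m \<Longrightarrow> f u < m"
  unfolding is_graph_aut_def bij_betw_def by auto

lemma inv_into_graph_aut_apply: "is_graph_aut m E f \<Longrightarrow> u < m \<Longrightarrow> inv_into {..<m} f (f u) = u"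
  unfolding is_graph_aut_def bij_betw_def by (auto intro: inv_into_f_f)

lemma is_graph_aut_comp:
  assumes f: "is_graph_aut m E f" and h: "is_graph_aut m E h"
  shows "is_graph_aut m E (f \<circ> h)"
proof -
  have "bij_betw (f \<circ> h) {..<m} {..<m}"
    using f h unfolding is_graph_aut_def by (auto intro: bij_betw_trans)
  moreover have "E u v = E (f (h u)) (f (h v))" if "u < m" "v < m" for u v
    using f h is_graph_aut_into[OF h] that unfolding is_graph_aut_def by metis
  ultimately show ?thesis unfolding is_graph_aut_def by auto
qed

lemma is_graph_aut_inv_into:
  assumes f: "is_graph_aut m E f"
  shows "is_graph_aut m E (inv_into {..<m} f)"
proof -
  have b: "bij_betw f {..<m} {..<m}" using f unfolding is_graph_aut_def by simp
  have bi: "bij_betw (inv_into {..<m} f) {..<m} {..<m}" by (rule bij_betw_inv_into[OF b])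
  have inv: "inv_into {..<m} f u < m" "f (inv_into {..<m} f u) = u" if "u < m" for u
    using bi b that unfolding bij_betw_def by (auto intro: f_inv_into_f)
  have "E u v = E (inv_into {..<m} f u) (inv_into {..<m} f v)" if "u < m" "v < m" for u v
    using f inv that unfolding is_graph_aut_def by metis
  thus ?thesis using bi unfolding is_graph_aut_def by auto
qed

lemma arc_transitive_iso:
  assumes at: "arc_transitive m G" and \<Phi>: "bij_betw \<Phi> {..<m} {..<m}"
    and iso: "\<And>u w. u < m \<Longrightarrow> w < m \<Longrightarrow> E u w = G (\<Phi> u) (\<Phi> w)"
  shows "arc_transitive m E"
  unfolding arc_transitive_def
proof (intro allI impI, elim conjE)
  fix u v x y assume u: "u < m" and v: "v < m" and x: "x < m" and y: "y < m"
    and uv: "E u v" and xy: "E x y"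
  let ?P = "inv_into {..<m} \<Phi>"
  have \<Phi>m: "z < m \<Longrightarrow> \<Phi> z < m" for z using \<Phi> unfolding bij_betw_def by auto
  have P\<Phi>: "z < m \<Longrightarrow> ?P (\<Phi> z) = z" for z using \<Phi> unfolding bij_betw_def by (auto intro: inv_into_f_f)
  have \<Phi>P: "z < m \<Longrightarrow> \<Phi> (?P z) = z" for z using \<Phi> unfolding bij_betw_def by (auto intro: f_inv_into_f)
  have Pm: "z < m \<Longrightarrow> ?P z < m" for z
    using bij_betw_inv_into[OF \<Phi>] unfolding bij_betw_def by auto
  obtain f where f: "is_graph_aut m G f" "f (\<Phi> u) = \<Phi> x" "f (\<Phi> v) = \<Phi> y"
    using at \<Phi>m[OF u] \<Phi>m[OF v] \<Phi>m[OF x] \<Phi>m[OF y] iso[OF u v] iso[OF x y] uv xy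
    unfolding arc_transitive_def by blast
  let ?g = "?P \<circ> f \<circ> \<Phi>"
  have "bij_betw ?g {..<m} {..<m}"
    using f(1) \<Phi> bij_betw_inv_into[OF \<Phi>] unfolding is_graph_aut_def by (auto intro: bij_betw_trans)
  moreover have "E a c = E (?g a) (?g c)" if a: "a < m" and c: "c < m" for a c
  proof -
    have "E a c = G (f (\<Phi> a)) (f (\<Phi> c))"
      using iso[OF a c] f(1) \<Phi>m[OF a] \<Phi>m[OF c] unfolding is_graph_aut_def by blast
    also have "\<dots> = E (?g a) (?g c)"
      using iso Pm \<Phi>P is_graph_aut_into[OF f(1)] \<Phi>m a c by simp
    finally show ?thesis .
  qed
  ultimately have "is_graph_aut m E ?g" unfolding is_graph_aut_def by auto
  moreover have "?g u = x" "?g v = y" using f P\<Phi> x y by auto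
  ultimately show "\<exists>f. is_graph_aut m E f \<and> f u = x \<and> f v = y" by blast
qed

lemma arc_transitiveI_stabilizer:
  assumes b: "b < m"
    and vertex: "\<And>x. x < m \<Longrightarrow> \<exists>f. is_graph_aut m E f \<and> f b = x"
    and stab: "\<And>w. w < m \<Longrightarrow> E b w \<Longrightarrow> \<exists>f. is_graph_aut m E f \<and> f b = b \<and> f w = w\<^sub>0"
  shows "arc_transitive m E"
proof -
  have to_base: "\<exists>a. is_graph_aut m E a \<and> a u = b \<and> a v = w\<^sub>0"
    if u: "u < m" and v: "v < m" and uv: "E u v" for u v
  proof -
    obtain f where f: "is_graph_aut m E f" "f b = u" using vertex[OF u] by blast
    let ?h = "inv_into {..<m} f"
    have h: "is_graph_aut m E ?h" by (rule is_graph_aut_inv_into[OF f(1)])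
    have hu: "?h u = b" using inv_into_graph_aut_apply[OF f(1) b] f(2) by simp
    have "E b (?h v)" using h u v uv hu unfolding is_graph_aut_def by metis
    then obtain g where g: "is_graph_aut m E g" "g b = b" "g (?h v) = w\<^sub>0"
      using stab is_graph_aut_into[OF h v] by blast
    show ?thesis using is_graph_aut_comp[OF g(1) h] g hu by (intro exI[of _ "g \<circ> ?h"]) auto
  qed
  show ?thesis unfolding arc_transitive_def
  proof (intro allI impI, elim conjE)
    fix u v x y assume "u < m" "v < m" "x < m" "y < m" "E u v" "E x y"
    then obtain a1 a2 where a1: "is_graph_aut m E a1" "a1 u = b" "a1 v = w\<^sub>0"
      and a2: "is_graph_aut m E a2" "a2 x = b" "a2 y = w\<^sub>0" and x: "x < m" and y: "y < m"
      using to_base by meson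
    let ?f = "inv_into {..<m} a2 \<circ> a1"
    have "is_graph_aut m E ?f" by (rule is_graph_aut_comp[OF is_graph_aut_inv_into[OF a2(1)] a1(1)])
    moreover have "?f u = x" "?f v = y"
      using a1 a2 inv_into_graph_aut_apply[OF a2(1) x] inv_into_graph_aut_apply[OF a2(1) y] by auto
    ultimately show "\<exists>f. is_graph_aut m E f \<and> f u = x \<and> f v = y" by blast
  qed
qed

lemma perm_mat_dims[simp]: "dim_row (perm_mat n \<sigma>) = n" "dim_col (perm_mat n \<sigma>) = n"
  unfolding perm_mat_def by simp_all

lemma perm_mat_index: "i < n \<Longrightarrow> j < n \<Longrightarrow> perm_mat n \<sigma> $$ (i, j) = (if \<sigma> i = j then 1 else 0)"
  unfolding perm_mat_def by simp

lemma funpow_lessThan: "(\<And>i. i < n \<Longrightarrow> \<sigma> i < n) \<Longrightarrow> i < n \<Longrightarrow> (\<sigma> ^^ p) i < n"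
  by (induct p) auto

lemma perm_mat_power:
  assumes \<sigma>: "\<And>i. i < n \<Longrightarrow> \<sigma> i < n"
  shows "perm_mat n \<sigma> ^\<^sub>m p = perm_mat n (\<sigma> ^^ p)"
proof (induct p)
  case 0
  show ?case by (rule eq_matI) (auto simp: perm_mat_index)
next
  case (Suc p)
  show ?case
  proof (rule eq_matI)
    fix i j assume "i < dim_row (perm_mat n (\<sigma> ^^ Suc p))" "j < dim_col (perm_mat n (\<sigma> ^^ Suc p))"
    hence i: "i < n" and j: "j < n" by auto
    have "(perm_mat n \<sigma> ^\<^sub>m Suc p) $$ (i, j) = row (perm_mat n (\<sigma> ^^ p)) i \<bullet> col (perm_mat n \<sigma>) j"
      using i j Suc by simp
    also have "\<dots> = (\<Sum>l<n. (if l = (\<sigma> ^^ p) i then 1 else 0) * (if \<sigma> l = j then 1 else 0))"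
      unfolding scalar_prod_def using i j
      by (auto simp: perm_mat_index lessThan_atLeast0 intro!: sum.cong)
    also have "\<dots> = (\<Sum>l<n. if l = (\<sigma> ^^ p) i then (if \<sigma> l = j then 1 else 0) else 0)"
      by (rule sum.cong) auto
    also have "\<dots> = perm_mat n (\<sigma> ^^ Suc p) $$ (i, j)"
      using i j funpow_lessThan[OF \<sigma> i, where p=p] by (simp add: perm_mat_index)
    finally show "(perm_mat n \<sigma> ^\<^sub>m Suc p) $$ (i, j) = perm_mat n (\<sigma> ^^ Suc p) $$ (i, j)" .
  qed auto
qed

lemma funpow_inj_on: assumes "inj_on \<sigma> S" "\<sigma> ` S \<subseteq> S" shows "inj_on (\<sigma> ^^ a) S"
proof (induct a)
  case (Suc a)
  have "(\<sigma> ^^ a) ` S \<subseteq> S" by (induct a) (use assms(2) in auto)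
  hence "inj_on (\<sigma> \<circ> (\<sigma> ^^ a)) S" using Suc assms(1) by (intro comp_inj_on) (auto intro: inj_on_subset)
  thus ?case by (metis funpow.simps(2))
qed simp

locale ncycle =
  fixes n :: nat and \<sigma> :: "nat \<Rightarrow> nat"
  assumes is_ncycle: "is_ncycle n \<sigma>" and n_pos: "n \<ge> 1"
begin

definition orbit_pt :: "nat \<Rightarrow> nat" where "orbit_pt i = (\<sigma> ^^ i) 0"

definition orbit_idx :: "nat \<Rightarrow> nat" where "orbit_idx = the_inv_into {..<n} orbit_pt"

lemma \<sigma>_lessThan: "i < n \<Longrightarrow> \<sigma> i < n"
  using is_ncycle unfolding is_ncycle_def bij_betw_def by auto

lemma orbit_pt_lessThan: "orbit_pt i < n"
  unfolding orbit_pt_def using funpow_lessThan[OF \<sigma>_lessThan, where i=0] n_pos by auto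

lemma inj_on_funpow: "inj_on (\<sigma> ^^ a) {..<n}"
  using is_ncycle unfolding is_ncycle_def bij_betw_def by (intro funpow_inj_on) auto

lemma funpow_cancel:
  assumes "a \<le> b" and "orbit_pt a = orbit_pt b"
  shows "(\<sigma> ^^ (b - a)) 0 = 0"
proof -
  have "(\<sigma> ^^ a) ((\<sigma> ^^ (b - a)) 0) = (\<sigma> ^^ a) 0"
    using assms unfolding orbit_pt_def by (metis funpow_add le_add_diff_inverse o_apply)
  thus ?thesis using inj_on_funpow[of a] funpow_lessThan[OF \<sigma>_lessThan, where i=0 and p="b - a"] n_pos
    by (auto dest: inj_onD)
qed

lemma no_shorter_period: assumes p: "0 < p" "p < n" shows "(\<sigma> ^^ p) 0 \<noteq> 0"
proof
  assume e: "(\<sigma> ^^ p) 0 = 0"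
  have "{..<n} \<subseteq> orbit_pt ` {..<p}"
  proof
    fix j assume "j \<in> {..<n}"
    then obtain m where "(\<sigma> ^^ m) 0 = j" using is_ncycle n_pos unfolding is_ncycle_def by auto
    hence "j = orbit_pt (m mod p)" using funpow_mod_eq[OF e, where m = m] unfolding orbit_pt_def by simp
    thus "j \<in> orbit_pt ` {..<p}" using p by auto
  qed
  hence "card {..<n} \<le> card (orbit_pt ` {..<p})" by (intro card_mono) auto
  also have "\<dots> \<le> p" using card_image_le[of "{..<p}" orbit_pt] by simp
  finally show False using p by simp
qed

lemma inj_on_orbit_pt: "inj_on orbit_pt {..<n}"
proof -
  have "a = b" if "a < n" "b < n" "a \<le> b" "orbit_pt a = orbit_pt b" for a b
    using funpow_cancel[of a b] no_shorter_period[of "b - a"] that by fastforce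
  thus ?thesis by (intro inj_onI) (metis lessThan_iff nat_le_linear)
qed

lemma bij_betw_orbit_pt: "bij_betw orbit_pt {..<n} {..<n}"
proof -
  have "orbit_pt ` {..<n} \<subseteq> {..<n}" using orbit_pt_lessThan by auto
  moreover have "card (orbit_pt ` {..<n}) = n" using card_image[OF inj_on_orbit_pt] by simp
  ultimately have "orbit_pt ` {..<n} = {..<n}" by (intro card_subset_eq) auto
  thus ?thesis using inj_on_orbit_pt unfolding bij_betw_def by simp
qed

lemma funpow_period: "(\<sigma> ^^ n) 0 = 0"
proof -
  obtain j where j: "j < n" "orbit_pt n = orbit_pt j"
    using bij_betw_orbit_pt orbit_pt_lessThan[of n] unfolding bij_betw_def by (metis imageE lessThan_iff)
  hence "(\<sigma> ^^ (n - j)) 0 = 0" using funpow_cancel[of j n] by simp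
  thus ?thesis using no_shorter_period[of "n - j"] j by (cases "j = 0") auto
qed

lemma funpow_orbit_pt: "(\<sigma> ^^ p) (orbit_pt i) = orbit_pt ((i + p) mod n)"
proof -
  have "(\<sigma> ^^ p) (orbit_pt i) = (\<sigma> ^^ (i + p)) 0"
    unfolding orbit_pt_def by (metis add.commute comp_apply funpow_add)
  also have "\<dots> = (\<sigma> ^^ ((i + p) mod n)) 0" by (rule funpow_mod_eq[OF funpow_period, symmetric])
  finally show ?thesis unfolding orbit_pt_def .
qed

lemma orbit_idx_lessThan: "r < n \<Longrightarrow> orbit_idx r < n"
  using bij_betw_the_inv_into[OF bij_betw_orbit_pt] unfolding orbit_idx_def bij_betw_def by auto

lemma orbit_pt_idx: "r < n \<Longrightarrow> orbit_pt (orbit_idx r) = r"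
  unfolding orbit_idx_def using bij_betw_orbit_pt by (simp add: bij_betw_def f_the_inv_into_f)

lemma orbit_idx_pt: "i < n \<Longrightarrow> orbit_idx (orbit_pt i) = i"
  unfolding orbit_idx_def using inj_on_orbit_pt by (simp add: the_inv_into_f_f)

lemma funpow_eq_iff_dvd:
  assumes r: "r < n" and q: "q < n"
  shows "(\<sigma> ^^ p) r = q \<longleftrightarrow> int n dvd int (orbit_idx r) + int p - int (orbit_idx q)"
proof -
  have "(\<sigma> ^^ p) r = q \<longleftrightarrow> orbit_pt ((orbit_idx r + p) mod n) = orbit_pt (orbit_idx q)"
    using funpow_orbit_pt[of p "orbit_idx r"] by (simp add: orbit_pt_idx r q)
  also have "\<dots> \<longleftrightarrow> (orbit_idx r + p) mod n = orbit_idx q mod n"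
    using inj_on_orbit_pt orbit_idx_lessThan[OF q] n_pos by (auto dest: inj_onD)
  also have "\<dots> \<longleftrightarrow> (int (orbit_idx r) + int p) mod int n = int (orbit_idx q) mod int n"
    by (simp flip: of_nat_mod of_nat_add)
  also have "\<dots> \<longleftrightarrow> int n dvd int (orbit_idx r) + int p - int (orbit_idx q)"
    by (rule mod_eq_dvd_iff)
  finally show ?thesis .
qed

end

section \<open>Cyclic covers\<close>

text \<open>Vertex \<open>s * n + i\<close> lies over the base vertex s at position \<open>i \<in> \<int>/n\<close>; a base edge from s
to t with voltage \<open>V s t\<close> lifts to the edges from \<open>(s, i)\<close> to \<open>(t, i + V s t)\<close>.\<close>

definition cyclic_cover :: "nat \<Rightarrow> (nat \<Rightarrow> nat \<Rightarrow> bool) \<Rightarrow> (nat \<Rightarrow> nat \<Rightarrow> int) \<Rightarrow> nat \<Rightarrow> nat \<Rightarrow> bool"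
  where "cyclic_cover n B V u w \<longleftrightarrow> B (u div n) (w div n) \<and>
    int n dvd int (u mod n) + V (u div n) (w div n) - int (w mod n)"

definition lift_perm :: "nat \<Rightarrow> (nat \<Rightarrow> nat) \<Rightarrow> int \<Rightarrow> (nat \<Rightarrow> int) \<Rightarrow> nat \<Rightarrow> nat"
  where "lift_perm n g r c u = g (u div n) * n + nat ((r * int (u mod n) + c (u div n)) mod int n)"

lemma block_add_less_iff: "(r::nat) < n \<Longrightarrow> s * n + r < m * n \<longleftrightarrow> s < m"
proof
  assume "r < n" "s < m"
  hence "Suc s * n \<le> m * n" by (intro mult_le_mono1) simp
  thus "s * n + r < m * n" using \<open>r < n\<close> by simp
qed (metis add_lessD1 mult_less_cancel2)

lemma block_div_mod:
  assumes "(r::nat) < n"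
  shows "(s * n + r) div n = s" and "(s * n + r) mod n = r"
  using assms by auto

lemma dvd_diff_small_eq:
  assumes "0 \<le> (a::int)" "a < m" "0 \<le> b" "b < m" "m dvd a - b"
  shows "a = b"
  using assms by (metis mod_eq_dvd_iff mod_pos_pos_trivial)

lemma lift_perm_div_mod:
  assumes "n \<ge> 1"
  shows "lift_perm n g r c u div n = g (u div n)"
    and "int (lift_perm n g r c u mod n) = (r * int (u mod n) + c (u div n)) mod int n"
proof -
  let ?x = "(r * int (u mod n) + c (u div n)) mod int n"
  have "0 \<le> ?x" "nat ?x < n" using assms by (auto simp: nat_less_iff)
  thus "lift_perm n g r c u div n = g (u div n)" "int (lift_perm n g r c u mod n) = ?x"
    unfolding lift_perm_def by (simp_all add: block_div_mod)
qed

lemma bij_betw_lift_perm: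
  assumes n: "n \<ge> 1" and g: "\<forall>s<m. g s < m" and g_inj: "inj_on g {..<m}" and r: "coprime (int n) r"
  shows "bij_betw (lift_perm n g r c) {..<m * n} {..<m * n}"
proof -
  let ?f = "lift_perm n g r c"
  have into: "?f u < m * n" if "u < m * n" for u
  proof -
    have "nat ((r * int (u mod n) + c (u div n)) mod int n) < n" using n by (simp add: nat_less_iff)
    thus ?thesis unfolding lift_perm_def using block_add_less_iff g less_mult_imp_div_less[OF that] by blast
  qed
  have "inj_on ?f {..<m * n}"
  proof (rule inj_onI)
    fix u w assume u: "u \<in> {..<m * n}" and w: "w \<in> {..<m * n}" and e: "?f u = ?f w"
    have s: "u div n = w div n"
      using e lift_perm_div_mod(1)[OF n] g_inj less_mult_imp_div_less u w by (metis inj_onD lessThan_iff)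
    have "int n dvd (r * int (u mod n) + c (u div n)) - (r * int (w mod n) + c (w div n))"
      using e lift_perm_div_mod(2)[OF n, of g r c] by (metis mod_eq_dvd_iff)
    hence "int n dvd r * (int (u mod n) - int (w mod n))" using s by (simp add: algebra_simps)
    hence "int n dvd int (u mod n) - int (w mod n)" using r by (simp add: coprime_dvd_mult_right_iff)
    hence "u mod n = w mod n" using dvd_diff_small_eq[of "int (u mod n)" "int n" "int (w mod n)"] n by auto
    thus "u = w" using s by (metis div_mult_mod_eq)
  qed
  thus ?thesis unfolding bij_betw_def using endo_inj_surj[of "{..<m * n}" ?f] into by auto
qed

lemma is_graph_aut_lift_perm:
  assumes n: "n \<ge> 1" and g: "\<forall>s<m. g s < m" and g_inj: "inj_on g {..<m}"
    and r: "coprime (int n) r"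
    and adj: "\<forall>s<m. \<forall>t<m. B s t = B (g s) (g t)"
    and volt: "\<forall>s<m. \<forall>t<m. B s t \<longrightarrow> int n dvd r * V s t + c t - c s - V (g s) (g t)"
  shows "is_graph_aut (m * n) (cyclic_cover n B V) (lift_perm n g r c)"
proof -
  let ?f = "lift_perm n g r c"
  have "cyclic_cover n B V u w = cyclic_cover n B V (?f u) (?f w)" if u: "u < m * n" and w: "w < m * n" for u w
  proof -
    let ?s = "u div n" and ?t = "w div n" and ?i = "int (u mod n)" and ?j = "int (w mod n)"
    have s: "?s < m" and t: "?t < m" using u w by (simp_all add: less_mult_imp_div_less)
    have "int n dvd ?i + V ?s ?t - ?j \<longleftrightarrow> int n dvd int (?f u mod n) + V (g ?s) (g ?t) - int (?f w mod n)"
      if "B ?s ?t"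
    proof -
      have "int n dvd (int (?f u mod n) + V (g ?s) (g ?t) - int (?f w mod n)) - r * (?i + V ?s ?t - ?j)"
      proof -
        have "int n dvd int (?f x mod n) - (r * int (x mod n) + c (x div n))" for x
          unfolding lift_perm_div_mod(2)[OF n] by (simp flip: mod_eq_dvd_iff)
        moreover have "int n dvd r * V ?s ?t + c ?t - c ?s - V (g ?s) (g ?t)" using volt s t that by blast
        moreover have "(int (?f u mod n) + V (g ?s) (g ?t) - int (?f w mod n)) - r * (?i + V ?s ?t - ?j)
          = (int (?f u mod n) - (r * ?i + c ?s)) - (int (?f w mod n) - (r * ?j + c ?t))
            - (r * V ?s ?t + c ?t - c ?s - V (g ?s) (g ?t))"
          by (simp add: algebra_simps)
        ultimately show ?thesis by (metis dvd_diff)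
      qed
      hence "int n dvd int (?f u mod n) + V (g ?s) (g ?t) - int (?f w mod n) \<longleftrightarrow> int n dvd r * (?i + V ?s ?t - ?j)"
        by (metis diff_add_cancel dvd_add_right_iff)
      also have "\<dots> \<longleftrightarrow> int n dvd ?i + V ?s ?t - ?j" using r by (simp add: coprime_dvd_mult_right_iff)
      finally show ?thesis by simp
    qed
    thus ?thesis unfolding cyclic_cover_def lift_perm_div_mod(1)[OF n] using adj s t by auto
  qed
  thus ?thesis unfolding is_graph_aut_def using bij_betw_lift_perm[OF n g g_inj r] by auto
qed

section \<open>The graph as a cover of the cube\<close>

text \<open>Base vertices \<open>0..3\<close> and \<open>4..7\<close> are the two colour classes of the cube; \<open>s\<close> and \<open>4 + t\<close>
are adjacent unless \<open>s + t = 3\<close>, i.e. unless block \<open>(s, t)\<close> of N is zero. The voltage of that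
edge is the exponent of C in the block.\<close>

definition cube_adj :: "nat \<Rightarrow> nat \<Rightarrow> bool" where
  "cube_adj s t \<longleftrightarrow> (s < 4 \<and> 4 \<le> t \<and> t < 8 \<and> s + (t - 4) \<noteq> 3) \<or> (t < 4 \<and> 4 \<le> s \<and> s < 8 \<and> t + (s - 4) \<noteq> 3)"

definition block_exp :: "nat \<Rightarrow> nat \<Rightarrow> nat \<Rightarrow> nat" where
  "block_exp k a b = (if a = 1 \<and> b = 1 then 1 else if a = 2 \<and> b = 2 then k + 1
     else if a = 2 \<and> b = 3 then k else if a = 3 \<and> b = 2 then k else if a = 3 \<and> b = 3 then k else 0)"

definition cube_voltage :: "nat \<Rightarrow> nat \<Rightarrow> nat \<Rightarrow> int" where
  "cube_voltage k s t = (if s < 4 then int (block_exp k s (t - 4)) else - int (block_exp k t (s - 4)))"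

abbreviation cube_cover :: "nat \<Rightarrow> nat \<Rightarrow> nat \<Rightarrow> nat \<Rightarrow> bool" where
  "cube_cover n k \<equiv> cyclic_cover n cube_adj (cube_voltage k)"

lemma N_mat_dims[simp]: "dim_row (N_mat n (perm_mat n \<sigma>) k) = 4 * n" "dim_col (N_mat n (perm_mat n \<sigma>) k) = 4 * n"
  unfolding N_mat_def Let_def by simp_all

lemma N_mat_block_index:
  assumes \<sigma>: "\<And>i. i < n \<Longrightarrow> \<sigma> i < n" and a: "a < 4" and b: "b < 4" and "r < n" "q < n"
  shows "N_mat n (perm_mat n \<sigma>) k $$ (a * n + r, b * n + q) =
    (if a + b \<noteq> 3 \<and> (\<sigma> ^^ block_exp k a b) r = q then 1 else 0)"
proof -
  have C: "\<And>p. perm_mat n \<sigma> ^\<^sub>m p = perm_mat n (\<sigma> ^^ p)" by (rule perm_mat_power[OF \<sigma>])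
  have "a = 0 \<or> a = 1 \<or> a = 2 \<or> a = 3" "b = 0 \<or> b = 1 \<or> b = 2 \<or> b = 3" using a b by auto
  thus ?thesis using \<open>r < n\<close> \<open>q < n\<close>
    unfolding N_mat_def Let_def C
    by (auto simp: perm_mat_index block_exp_def)
qed

lemma bip_adj_block_index:
  assumes \<sigma>: "\<And>i. i < n \<Longrightarrow> \<sigma> i < n" and s: "s < 8" and t: "t < 8" and r: "r < n" and q: "q < n"
  shows "bip_adj n (N_mat n (perm_mat n \<sigma>) k) $$ (s * n + r, t * n + q) =
    (if cube_adj s t \<and> (if s < 4 then (\<sigma> ^^ block_exp k s (t - 4)) r = q
                         else (\<sigma> ^^ block_exp k t (s - 4)) q = r) then 1 else 0)"
proof -
  let ?N = "N_mat n (perm_mat n \<sigma>) k"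
  have u: "s * n + r < 4 * n + 4 * n" and w: "t * n + q < 4 * n + 4 * n"
    using block_add_less_iff[OF r, of s 8] block_add_less_iff[OF q, of t 8] s t by auto
  have s4: "(s - 4) * n + r < 4 * n" and t4: "(t - 4) * n + q < 4 * n"
    using block_add_less_iff[OF r, of "s - 4" 4] block_add_less_iff[OF q, of "t - 4" 4] s t by auto
  have "bip_adj n ?N $$ (s * n + r, t * n + q) =
      (if s < 4 then if t < 4 then 0 else ?N $$ (s * n + r, (t - 4) * n + q)
       else if t < 4 then ?N $$ (t * n + q, (s - 4) * n + r) else 0)"
    unfolding bip_adj_def using u w s4 t4 block_add_less_iff[OF r, of s 4] block_add_less_iff[OF q, of t 4]
    by (auto simp: diff_mult_distrib)
  thus ?thesis using s t r q by (auto simp: N_mat_block_index[OF \<sigma>] cube_adj_def)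
qed

lemma transpose_bip_adj: "N \<in> carrier_mat (4 * n) (4 * n) \<Longrightarrow> transpose_mat (bip_adj n N) = bip_adj n N"
  unfolding bip_adj_def by (subst transpose_four_block_mat) auto

context ncycle
begin

definition relabel :: "nat \<Rightarrow> nat" where "relabel u = (u div n) * n + orbit_idx (u mod n)"

definition unlabel :: "nat \<Rightarrow> nat" where "unlabel z = (z div n) * n + orbit_pt (z mod n)"

lemma relabel_div_mod: "relabel u div n = u div n" "relabel u mod n = orbit_idx (u mod n)"
  unfolding relabel_def using orbit_idx_lessThan[of "u mod n"] n_pos by auto

lemma unlabel_div_mod: "unlabel z div n = z div n" "unlabel z mod n = orbit_pt (z mod n)"
  unfolding unlabel_def using orbit_pt_lessThan[of "z mod n"] by auto

lemma relabel_unlabel: "relabel (unlabel z) = z"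
  unfolding relabel_def unlabel_div_mod using orbit_idx_pt[of "z mod n"] n_pos by simp

lemma unlabel_relabel: "unlabel (relabel u) = u"
  unfolding unlabel_def relabel_div_mod using orbit_pt_idx[of "u mod n"] n_pos by simp

lemma relabel_lessThan: "u < m * n \<Longrightarrow> relabel u < m * n"
proof -
  have "orbit_idx (u mod n) < n" using n_pos by (simp add: orbit_idx_lessThan)
  thus "u < m * n \<Longrightarrow> relabel u < m * n"
    unfolding relabel_def using block_add_less_iff less_mult_imp_div_less by blast
qed

lemma unlabel_lessThan: "z < m * n \<Longrightarrow> unlabel z < m * n"
  unfolding unlabel_def using block_add_less_iff[OF orbit_pt_lessThan] less_mult_imp_div_less by blast

lemma bij_betw_relabel: "bij_betw relabel {..<m * n} {..<m * n}"
  by (rule bij_betwI[where g = unlabel]) (auto simp: relabel_lessThan unlabel_lessThan relabel_unlabel unlabel_relabel)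

lemma bij_betw_unlabel: "bij_betw unlabel {..<m * n} {..<m * n}"
  by (rule bij_betwI[where g = relabel]) (auto simp: relabel_lessThan unlabel_lessThan relabel_unlabel unlabel_relabel)

lemma bip_adj_index:
  assumes u: "u < 8 * n" and w: "w < 8 * n"
  shows "bip_adj n (N_mat n (perm_mat n \<sigma>) k) $$ (u, w) =
    (if cube_cover n k (relabel u) (relabel w) then 1 else 0)"
proof -
  define s r t q where "s = u div n" "r = u mod n" "t = w div n" "q = w mod n"
  have s: "s < 8" and t: "t < 8" and r: "r < n" and q: "q < n"
    unfolding s_r_t_q_def using u w n_pos by (auto intro: less_mult_imp_div_less)
  have "(if s < 4 then (\<sigma> ^^ block_exp k s (t - 4)) r = q else (\<sigma> ^^ block_exp k t (s - 4)) q = r)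
      \<longleftrightarrow> int n dvd int (orbit_idx r) + cube_voltage k s t - int (orbit_idx q)"
  proof -
    have "int n dvd int (orbit_idx q) + int p - int (orbit_idx r)
        \<longleftrightarrow> int n dvd int (orbit_idx r) - int p - int (orbit_idx q)" for p
      by (metis dvd_minus_iff minus_diff_eq diff_diff_eq2 diff_add_eq)
    thus ?thesis unfolding cube_voltage_def funpow_eq_iff_dvd[OF r q] funpow_eq_iff_dvd[OF q r] by simp
  qed
  moreover have "u = s * n + r" "w = t * n + q" unfolding s_r_t_q_def by simp_all
  ultimately show ?thesis
    unfolding cyclic_cover_def relabel_div_mod s_r_t_q_def
    using bip_adj_block_index[OF \<sigma>_lessThan s t r q] unfolding s_r_t_q_def by simp
qed

end

section \<open>Arc-transitivity\<close>

lemma all_less_eight: "(\<forall>s<(8::nat). P s) \<longleftrightarrow> P 0 \<and> P 1 \<and> P 2 \<and> P 3 \<and> P 4 \<and> P 5 \<and> P 6 \<and> P 7"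
proof
  assume "P 0 \<and> P 1 \<and> P 2 \<and> P 3 \<and> P 4 \<and> P 5 \<and> P 6 \<and> P 7"
  thus "\<forall>s<8. P s" by (auto simp: less_Suc_eq numeral_eq_Suc)
qed simp

lemma coprime_if_dvd_square_add: "(n::int) dvd k^2 + k + 1 \<Longrightarrow> coprime n k"
proof (rule coprimeI)
  fix d assume "n dvd k^2 + k + 1" "d dvd n" "d dvd k"
  hence "d dvd (k^2 + k + 1) - k * (k + 1)" by (meson dvd_diff dvd_mult2 dvd_trans)
  thus "is_unit d" by (simp add: algebra_simps power2_eq_square)
qed

text \<open>The rotation of the cube fixing 0 and 7 and permuting the neighbours 4, 5, 6 of 0; it lifts
with scale k because \<open>k\<^sup>3 \<equiv> 1\<close> modulo n.\<close>

definition cube_rotation :: "nat \<Rightarrow> nat \<Rightarrow> nat \<Rightarrow> nat" where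
  "cube_rotation n k = lift_perm n ((!) [0,3,1,2,5,6,4,7]) (int k) ((!) [0,0,-1,-1-int k,0,0,0,int k])"

lemma is_graph_aut_cube_rotation:
  assumes n: "n \<ge> 1" and h: "int n dvd int k^2 + int k + 1"
  shows "is_graph_aut (8 * n) (cube_cover n k) (cube_rotation n k)"
  unfolding cube_rotation_def
proof (rule is_graph_aut_lift_perm[OF n])
  have h': "int n dvd -(int k^2 + int k + 1)" using h by (simp only: dvd_minus_iff)
  show "coprime (int n) (int k)" by (rule coprime_if_dvd_square_add[OF h])
  show "\<forall>s<8. [0,3,1,2,5,6,4,7::nat] ! s < 8" unfolding all_less_eight by simp
  show "inj_on ((!) [0,3,1,2,5,6,4,7::nat]) {..<8}" by (rule inj_on_nth) auto
  show "\<forall>s<8. \<forall>t<8. cube_adj s t = cube_adj ([0,3,1,2,5,6,4,7::nat] ! s) ([0,3,1,2,5,6,4,7::nat] ! t)"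
    unfolding all_less_eight by (simp add: cube_adj_def)
  show "\<forall>s<8. \<forall>t<8. cube_adj s t \<longrightarrow> int n dvd int k * cube_voltage k s t
      + [0,0,-1,-1-int k,0,0,0,int k] ! t - [0,0,-1,-1-int k,0,0,0,int k] ! s
      - cube_voltage k ([0,3,1,2,5,6,4,7::nat] ! s) ([0,3,1,2,5,6,4,7::nat] ! t)"
    unfolding all_less_eight using h h'
    by (simp add: cube_adj_def cube_voltage_def block_exp_def algebra_simps power2_eq_square)
qed

text \<open>\<open>cube_translation t\<close> is the translation \<open>s \<mapsto> s XOR t\<close> of the cube \<open>(\<int>/2)\<^sup>3\<close>. For \<open>t \<ge> 4\<close> it
exchanges the colour classes and so reverses the orientation of every voltage, hence the scale
\<open>-1\<close>; the shifts correct the voltages by a coboundary.\<close>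

definition cube_translation :: "nat \<Rightarrow> nat list" where
  "cube_translation t = [[0,1,2,3,4,5,6,7],[1,0,3,2,5,4,7,6],[2,3,0,1,6,7,4,5],[3,2,1,0,7,6,5,4],
     [4,5,6,7,0,1,2,3],[5,4,7,6,1,0,3,2],[6,7,4,5,2,3,0,1],[7,6,5,4,3,2,1,0]] ! t"

definition translation_scale :: "nat \<Rightarrow> int" where
  "translation_scale t = (if t < 4 then 1 else -1)"

definition translation_shift :: "nat \<Rightarrow> nat \<Rightarrow> int list" where
  "translation_shift k t = (let K = int k in
     [[0,0,0,0,0,0,0,0],[0,1,1,0,1,0,0,1],[0,1,K+1,K,K+1,K,0,1],[0,0,K,K,K,K,0,0],
      [0,0,0,0,0,0,0,0],[0,-1,-1,0,-1,0,0,-1],[0,-1,-K-1,-K,-K-1,-K,0,-1],[0,0,-K,-K,-K,-K,0,0]] ! t)"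

lemma is_graph_aut_cube_translation:
  assumes n: "n \<ge> 1"
  shows "\<forall>t<8. is_graph_aut (8 * n) (cube_cover n k)
    (lift_perm n ((!) (cube_translation t)) (translation_scale t) (\<lambda>s. translation_shift k t ! s + d))"
  unfolding all_less_eight
  by (intro conjI; rule is_graph_aut_lift_perm[OF n];
      simp add: all_less_eight cube_translation_def translation_scale_def translation_shift_def Let_def
        cube_adj_def cube_voltage_def block_exp_def algebra_simps inj_on_nth)

lemma cube_cover_vertex_transitive:
  assumes n: "n \<ge> 1" and x: "x < 8 * n"
  shows "\<exists>f. is_graph_aut (8 * n) (cube_cover n k) f \<and> f 0 = x"
proof -
  define t where "t = x div n"
  have t: "t < 8" unfolding t_def using x by (rule less_mult_imp_div_less)
  let ?f = "lift_perm n ((!) (cube_translation t)) (translation_scale t) (\<lambda>s. translation_shift k t ! s + int (x mod n))"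
  have "\<forall>t<8. cube_translation t ! 0 = t" "\<forall>t<8. translation_shift k t ! 0 = 0"
    unfolding all_less_eight by (simp_all add: cube_translation_def translation_shift_def Let_def)
  moreover have "int (x mod n) mod int n = int (x mod n)" by (simp flip: of_nat_mod)
  ultimately have "?f 0 = x" unfolding lift_perm_def using t by (simp add: t_def)
  thus ?thesis using is_graph_aut_cube_translation[OF n] t by blast
qed

lemma cube_cover_neighbours_zero:
  assumes n: "n \<ge> 1" and w: "w < 8 * n" and adj: "cube_cover n k 0 w"
  shows "w = 4 * n \<or> w = 5 * n \<or> w = 6 * n"
proof -
  have "int n dvd int (w mod n)" and "w div n \<in> {4, 5, 6}"
    using adj n unfolding cyclic_cover_def cube_voltage_def block_exp_def cube_adj_def by auto
  moreover have "int (w mod n) = 0" if "int n dvd int (w mod n)"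
    using dvd_diff_small_eq[of "int (w mod n)" "int n" 0] that n by auto
  ultimately show ?thesis by (metis div_mult_mod_eq add_0_right insertE of_nat_eq_0_iff singletonD)
qed

lemma cube_rotation_apply:
  assumes "n \<ge> 1"
  shows "cube_rotation n k 0 = 0" "cube_rotation n k (5 * n) = 6 * n" "cube_rotation n k (6 * n) = 4 * n"
  unfolding cube_rotation_def lift_perm_def using assms by auto

lemma cube_cover_arc_transitive:
  assumes n: "n \<ge> 1" and h: "int n dvd int k^2 + int k + 1"
  shows "arc_transitive (8 * n) (cube_cover n k)"
proof (rule arc_transitiveI_stabilizer[where b = 0 and w\<^sub>0 = "4 * n"])
  show "0 < 8 * n" using n by simp
  show "\<exists>f. is_graph_aut (8 * n) (cube_cover n k) f \<and> f 0 = x" if "x < 8 * n" for x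
    by (rule cube_cover_vertex_transitive[OF n that])
  fix w assume "w < 8 * n" "cube_cover n k 0 w"
  let ?\<rho> = "cube_rotation n k"
  have \<rho>: "is_graph_aut (8 * n) (cube_cover n k) ?\<rho>" by (rule is_graph_aut_cube_rotation[OF n h])
  have "is_graph_aut (8 * n) (cube_cover n k) id" unfolding is_graph_aut_def by simp
  moreover note \<rho> is_graph_aut_comp[OF \<rho> \<rho>]
  ultimately show "\<exists>f. is_graph_aut (8 * n) (cube_cover n k) f \<and> f 0 = 0 \<and> f w = 4 * n"
    using cube_cover_neighbours_zero[OF n \<open>w < 8 * n\<close> \<open>cube_cover n k 0 w\<close>] cube_rotation_apply[OF n]
    by (metis comp_apply id_apply)
qed

lemma (in ncycle) arc_transitive_bip_adj:
  assumes h: "int n dvd int k^2 + int k + 1"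
  shows "arc_transitive (8 * n) (mat_graph (bip_adj n (N_mat n (perm_mat n \<sigma>) k)))"
  by (rule arc_transitive_iso[OF cube_cover_arc_transitive[OF n_pos h] bij_betw_relabel])
    (simp add: mat_graph_def bip_adj_index)

section \<open>Periodic functions on the integers\<close>

lemma shift_invariant_mult:
  assumes "\<And>j. g (j + e) = g (j::int)"
  shows "g (j + e * m) = g j"
proof (induct m rule: int_induct[where k = 0])
  case (step1 i) thus ?case using assms[of "j + e * i"] by (simp add: algebra_simps)
next
  case (step2 i) thus ?case using assms[of "j + e * (i - 1)"] by (simp add: algebra_simps)
qed simp

text \<open>Telescoping along \<open>0, e, 2e, \<dots>, n e\<close> gives \<open>n c = 0\<close>.\<close>

lemma periodic_shift_diff_zero:
  fixes u :: "int \<Rightarrow> 'a::{idom,ring_char_0}"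
  assumes per: "\<And>j. u (j + int n) = u j" and n: "n \<ge> 1" and diff: "\<And>j. u j - u (j + e) = c"
  shows "c = 0"
proof -
  have tele: "u 0 - u (int m * e) = of_nat m * c" for m
  proof (induct m)
    case (Suc m)
    have "u 0 - u (int (Suc m) * e) = (u 0 - u (int m * e)) + (u (int m * e) - u (int m * e + e))"
      by (simp add: algebra_simps)
    also have "\<dots> = of_nat m * c + c" using Suc diff[of "int m * e"] by simp
    also have "\<dots> = of_nat (Suc m) * c" by (simp add: algebra_simps)
    finally show ?case .
  qed simp
  moreover have "u (int n * e) = u 0" using shift_invariant_mult[of u "int n", OF per, of 0 e] by simp
  ultimately have "of_nat n * c = 0" using tele[of n] by simp
  thus ?thesis using n by simp
qed

lemma shift_invariant_const:
  assumes per: "\<And>j. g (j + int n) = g j" and inv: "\<And>j. g (j + e) = g (j::int)"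
    and unit: "int n dvd m * e - 1"
  shows "g j = g 0"
proof -
  obtain q where q: "m * e - 1 = int n * q" using unit by (elim dvdE)
  have "g (i + 1) = g i" for i
  proof -
    have "g (i + 1) = g (i + 1 + int n * q)" by (rule shift_invariant_mult[of g "int n", OF per, symmetric])
    also have "\<dots> = g (i + e * m)" using q by (simp add: algebra_simps)
    also have "\<dots> = g i" by (rule shift_invariant_mult[of g e, OF inv])
    finally show ?thesis .
  qed
  thus ?thesis using shift_invariant_mult[of g 1 0 j] by simp
qed

lemma periodic_const_if_shift_diff_const:
  fixes g :: "int \<Rightarrow> 'a::{idom,ring_char_0}"
  assumes per: "\<And>j. g (j + int n) = g j" and n: "n \<ge> 1" and unit: "int n dvd m * e - 1"
    and diff: "\<And>j. g j - g (j + e) = c"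
  shows "g j = g 0"
proof (rule shift_invariant_const[where g = g, OF per _ unit])
  have "c = 0" by (rule periodic_shift_diff_zero[where u = g, OF per n diff])
  thus "g (j + e) = g j" for j using diff[of j] by simp
qed

text \<open>The operator annihilating Y factors as \<open>(T - 1)(1 - T^K)(1 - T^(-1-K))\<close> in the shift T, and
\<open>1\<close>, \<open>K\<close> and \<open>-1 - K\<close> are units modulo n when n divides \<open>K\<^sup>2 + K + 1\<close>.\<close>

lemma periodic_const_if_triple_difference:
  fixes Y :: "int \<Rightarrow> 'a::{idom,ring_char_0}" and K :: int
  assumes per: "\<And>j. Y (j + int n) = Y j" and n: "n \<ge> 1" and K: "int n dvd K^2 + K + 1"
    and Z: "\<And>j. - Y (j - 1 - K) + Y (j - 1) + Y (j - K) - Y (j + K) - Y (j + 1) + Y (j + 1 + K) = 0"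
  shows "Y j = Y 0"
proof -
  define D where "D j = Y j - Y (j + (- 1 - K))" for j
  define DD where "DD j = D j - D (j + K)" for j
  have per_D: "D (j + int n) = D j" for j
    unfolding D_def using per[of j] per[of "j + (- 1 - K)"] by (simp add: algebra_simps)
  have per_DD: "DD (j + int n) = DD j" for j
    unfolding DD_def using per_D[of j] per_D[of "j + K"] by (simp add: algebra_simps)
  have DD: "DD j = DD 0" for j
  proof (rule periodic_const_if_shift_diff_const[where g = DD, OF per_DD n])
    show "int n dvd 1 * 1 - 1" by simp
    show "DD j - DD (j + 1) = 0" for j using Z[of j] unfolding DD_def D_def by (simp add: algebra_simps)
  qed
  have D: "D j = D 0" for j
  proof (rule periodic_const_if_shift_diff_const[where g = D, OF per_D n])
    have "K^2 * K - 1 = (K - 1) * (K^2 + K + 1)" by (simp add: algebra_simps power2_eq_square)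
    thus "int n dvd K^2 * K - 1" using K by simp
    show "D j - D (j + K) = DD 0" for j using DD[of j] unfolding DD_def .
  qed
  show "Y j = Y 0"
  proof (rule periodic_const_if_shift_diff_const[where g = Y, OF per n])
    have "K * (- 1 - K) - 1 = - (K^2 + K + 1)" by (simp add: algebra_simps power2_eq_square)
    thus "int n dvd K * (- 1 - K) - 1" using K by (metis dvd_minus_iff)
    show "Y j - Y (j + (- 1 - K)) = D 0" for j using D[of j] unfolding D_def .
  qed
qed

section \<open>Eigenvectors of the cover\<close>

lemma sum_lessThan_eight: "(\<Sum>t<(8::nat). f t) = f 0 + f 1 + f 2 + f 3 + f 4 + f 5 + f 6 + f 7"
proof -
  have "{..<(8::nat)} = {0,1,2,3,4,5,6,7}" by auto
  thus ?thesis by (simp add: add.assoc)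
qed

lemma cube_cover_eigen_eqs:
  fixes F :: "nat \<Rightarrow> int \<Rightarrow> 'a::comm_ring_1"
  assumes eig: "\<And>s j. s < 8 \<Longrightarrow> l * F s j = (\<Sum>t<8. if cube_adj s t then F t (j + cube_voltage k s t) else 0)"
  defines "K \<equiv> int k"
  shows "l * F 0 j = F 4 j + F 5 j + F 6 j"
    and "l * F 1 j = F 4 j + F 5 (j + 1) + F 7 j"
    and "l * F 2 j = F 4 j + F 6 (j + 1 + K) + F 7 (j + K)"
    and "l * F 3 j = F 5 j + F 6 (j + K) + F 7 (j + K)"
    and "l * F 4 j = F 0 j + F 1 j + F 2 j"
    and "l * F 5 j = F 0 j + F 1 (j - 1) + F 3 j"
    and "l * F 6 j = F 0 j + F 2 (j - 1 - K) + F 3 (j - K)"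
    and "l * F 7 j = F 1 j + F 2 (j - K) + F 3 (j - K)"
  using eig[of 0 j] eig[of 1 j] eig[of 2 j] eig[of 3 j] eig[of 4 j] eig[of 5 j] eig[of 6 j] eig[of 7 j]
  by (simp_all add: sum_lessThan_eight cube_adj_def cube_voltage_def block_exp_def K_def algebra_simps)

text \<open>Applying the eigen-equations twice expresses each bottom fibre \<open>F t\<close>, \<open>t \<ge> 4\<close>, through the
bottom fibres (\<open>R t\<close> below); the difference operator applied to \<open>F s\<close> is a combination of the
shifted \<open>R t - F t\<close>.\<close>

lemma cube_cover_fibre_difference_eq:
  fixes F :: "nat \<Rightarrow> int \<Rightarrow> 'a::comm_ring_1"
  assumes l: "l = 1 \<or> l = -1"
    and eig: "\<And>s j. s < 8 \<Longrightarrow> l * F s j = (\<Sum>t<8. if cube_adj s t then F t (j + cube_voltage k s t) else 0)"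
    and s: "s \<in> {4, 5, 6, 7}"
  defines "K \<equiv> int k"
  shows "- F s (j - 1 - K) + F s (j - 1) + F s (j - K) - F s (j + K) - F s (j + 1) + F s (j + 1 + K) = 0"
proof -
  note e = cube_cover_eigen_eqs[OF eig, folded K_def]
  have flip: "x = l * y" if "l * x = y" for x y using that l by auto
  define R where "R (t::nat) j = (if t = 4 then F 4 j + F 5 j + F 6 j + F 4 j + F 5 (j + 1) + F 7 j + F 4 j + F 6 (j + 1 + K) + F 7 (j + K)
    else if t = 5 then F 4 j + F 5 j + F 6 j + F 4 (j - 1) + F 5 j + F 7 (j - 1) + F 5 j + F 6 (j + K) + F 7 (j + K)
    else if t = 6 then F 4 j + F 5 j + F 6 j + F 4 (j - 1 - K) + F 6 j + F 7 (j - 1) + F 5 (j - K) + F 6 j + F 7 j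
    else F 4 j + F 5 (j + 1) + F 7 j + F 4 (j - K) + F 6 (j + 1) + F 7 j + F 5 (j - K) + F 6 j + F 7 j)" for t j
  have f: "F 0 j = l * (F 4 j + F 5 j + F 6 j)" "F 1 j = l * (F 4 j + F 5 (j + 1) + F 7 j)"
    "F 2 j = l * (F 4 j + F 6 (j + 1 + K) + F 7 (j + K))" "F 3 j = l * (F 5 j + F 6 (j + K) + F 7 (j + K))"
    "F 4 j = l * (F 0 j + F 1 j + F 2 j)" "F 5 j = l * (F 0 j + F 1 (j - 1) + F 3 j)"
    "F 6 j = l * (F 0 j + F 2 (j - 1 - K) + F 3 (j - K))" "F 7 j = l * (F 1 j + F 2 (j - K) + F 3 (j - K))"
    for j using e[of j] by (simp_all add: flip)
  have two_step: "F t j = R t j" if "t \<in> {4, 5, 6, 7}" for t j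
  proof -
    have "F 4 j = R 4 j" "F 5 j = R 5 j" "F 6 j = R 6 j" "F 7 j = R 7 j"
      unfolding f(5-8) unfolding f(1-4) R_def using l by (auto simp: algebra_simps)
    thus ?thesis using that by auto
  qed
  have settled: "R t x - F t x = 0" if "t \<in> {4, 5, 6, 7}" for t x using two_step[OF that] by simp
  have "- F 4 (j - 1 - K) + F 4 (j - 1) + F 4 (j - K) - F 4 (j + K) - F 4 (j + 1) + F 4 (j + 1 + K)
      = (R 5 j - F 5 j) - (R 5 (j + 1) - F 5 (j + 1)) - (R 6 j - F 6 j) + (R 6 (j + 1 + K) - F 6 (j + 1 + K))
        + (R 7 j - F 7 j) - (R 7 (j + K) - F 7 (j + K))"
    and "- F 5 (j - 1 - K) + F 5 (j - 1) + F 5 (j - K) - F 5 (j + K) - F 5 (j + 1) + F 5 (j + 1 + K)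
      = (R 4 (j - 1) - F 4 (j - 1)) - (R 4 j - F 4 j) + (R 6 j - F 6 j) - (R 6 (j + K) - F 6 (j + K))
        - (R 7 (j - 1) - F 7 (j - 1)) + (R 7 (j + K) - F 7 (j + K))"
    and "- F 6 (j - 1 - K) + F 6 (j - 1) + F 6 (j - K) - F 6 (j + K) - F 6 (j + 1) + F 6 (j + 1 + K)
      = - (R 4 (j - 1 - K) - F 4 (j - 1 - K)) + (R 4 j - F 4 j) + (R 5 (j - K) - F 5 (j - K)) - (R 5 j - F 5 j)
        + (R 7 (j - 1) - F 7 (j - 1)) - (R 7 j - F 7 j)"
    and "- F 7 (j - 1 - K) + F 7 (j - 1) + F 7 (j - K) - F 7 (j + K) - F 7 (j + 1) + F 7 (j + 1 + K)
      = (R 4 (j - K) - F 4 (j - K)) - (R 4 j - F 4 j) - (R 5 (j - K) - F 5 (j - K)) + (R 5 (j + 1) - F 5 (j + 1))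
        + (R 6 j - F 6 j) - (R 6 (j + 1) - F 6 (j + 1))"
    unfolding R_def by (simp_all add: algebra_simps)
  thus ?thesis using s settled[of 4] settled[of 5] settled[of 6] settled[of 7] by auto
qed

lemma cube_cover_fibres_const:
  fixes F :: "nat \<Rightarrow> int \<Rightarrow> 'a::{idom,ring_char_0}"
  assumes n: "n \<ge> 1" and h: "int n dvd int k^2 + int k + 1" and l: "l = 1 \<or> l = -1"
    and per: "\<And>s j. F s (j + int n) = F s j"
    and eig: "\<And>s j. s < 8 \<Longrightarrow> l * F s j = (\<Sum>t<8. if cube_adj s t then F t (j + cube_voltage k s t) else 0)"
    and s: "s < 8"
  shows "F s j = F s 0"
proof -
  have bottom: "F t j = F t 0" if "t \<in> {4, 5, 6, 7}" for t j
    using periodic_const_if_triple_difference[OF per n h cube_cover_fibre_difference_eq[OF l eig that]] .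
  have Y: "F 4 i = F 4 0" "F 5 i = F 5 0" "F 6 i = F 6 0" "F 7 i = F 7 0" for i by (rule bottom, simp)+
  note e = cube_cover_eigen_eqs[OF eig]
  have top: "l * F 0 j = l * F 0 0" "l * F 1 j = l * F 1 0" "l * F 2 j = l * F 2 0" "l * F 3 j = l * F 3 0"
    using e(1)[of j] e(1)[of 0] e(2)[of j] e(2)[of 0] e(3)[of j] e(3)[of 0] e(4)[of j] e(4)[of 0]
    by (metis Y)+
  have "l \<noteq> 0" using l by auto
  have "F t j = F t 0" if "t < 4" for t
  proof -
    have "t = 0 \<or> t = 1 \<or> t = 2 \<or> t = 3" using that by auto
    thus ?thesis using top \<open>l \<noteq> 0\<close> by (elim disjE) simp_all
  qed
  thus ?thesis using s by (cases "s < 4") (auto intro: bottom)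
qed

text \<open>The vertex \<open>7 - t\<close> is antipodal to \<open>t\<close> in the cube.\<close>

definition antipodal_ext :: "'a::comm_ring_1 \<Rightarrow> (nat \<Rightarrow> 'a) \<Rightarrow> nat \<Rightarrow> 'a" where
  "antipodal_ext l \<beta> t = (if 4 \<le> t then \<beta> t else - l * \<beta> (7 - t))"

lemma cube_eigen_antipodal_ext:
  fixes \<beta> :: "nat \<Rightarrow> 'a::comm_ring_1"
  assumes l: "l = 1 \<or> l = -1" and \<beta>: "\<beta> 4 + \<beta> 5 + \<beta> 6 + \<beta> 7 = 0" and s: "s < 8"
  shows "(\<Sum>t<8. if cube_adj s t then antipodal_ext l \<beta> t else 0) = l * antipodal_ext l \<beta> s"
proof -
  have \<beta>7: "\<beta> 7 = - \<beta> 4 - \<beta> 5 - \<beta> 6" using \<beta> by (simp add: algebra_simps eq_neg_iff_add_eq_0)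
  have "s = 0 \<or> s = 1 \<or> s = 2 \<or> s = 3 \<or> s = 4 \<or> s = 5 \<or> s = 6 \<or> s = 7" using s by auto
  thus ?thesis using l
    by (elim disjE) (simp_all add: sum_lessThan_eight cube_adj_def antipodal_ext_def \<beta>7 algebra_simps)
qed

lemma antipodal_ext_if_cube_eigen:
  fixes c :: "nat \<Rightarrow> 'a::{idom,ring_char_0}"
  assumes l: "l = 1 \<or> l = -1"
    and eig: "\<And>s. s < 8 \<Longrightarrow> l * c s = (\<Sum>t<8. if cube_adj s t then c t else 0)"
  shows "c 4 + c 5 + c 6 + c 7 = 0" and "\<And>t. t < 8 \<Longrightarrow> antipodal_ext l c t = c t"
proof -
  have e: "l * c 0 = c 4 + c 5 + c 6" "l * c 1 = c 4 + c 5 + c 7" "l * c 2 = c 4 + c 6 + c 7"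
    "l * c 3 = c 5 + c 6 + c 7" "l * c 4 = c 0 + c 1 + c 2" "l * c 5 = c 0 + c 1 + c 3"
    "l * c 6 = c 0 + c 2 + c 3" "l * c 7 = c 1 + c 2 + c 3"
    using eig[of 0] eig[of 1] eig[of 2] eig[of 3] eig[of 4] eig[of 5] eig[of 6] eig[of 7]
    by (simp_all add: sum_lessThan_eight cube_adj_def)
  define S where "S = c 4 + c 5 + c 6 + c 7"
  define T where "T = c 0 + c 1 + c 2 + c 3"
  have lT: "l * T = 3 * S" and lS: "l * S = 3 * T"
    unfolding T_def S_def using e by (simp_all add: algebra_simps)
  have "S = l * (l * S)" using l by auto
  also have "\<dots> = 3 * (l * T)" using lS by (simp add: algebra_simps)
  also have "\<dots> = 9 * S" using lT by simp
  finally have "8 * S = 0" by simp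
  hence "S = 0" by simp
  thus S: "c 4 + c 5 + c 6 + c 7 = 0" unfolding S_def .
  have "l * c 0 = - c 7" "l * c 1 = - c 6" "l * c 2 = - c 5" "l * c 3 = - c 4"
    using e S by (simp_all add: algebra_simps eq_neg_iff_add_eq_0)
  hence "c t = - l * c (7 - t)" if "t < 4" for t
    using that l by (auto simp: less_Suc_eq numeral_eq_Suc)
  thus "antipodal_ext l c t = c t" if "t < 8" for t using that unfolding antipodal_ext_def by auto
qed

text \<open>Extended by \<open>antipodal_ext l\<close>, \<open>cube_basis i\<close> (\<open>i < 3\<close>) is the \<open>l\<close>-eigenvector of the
cube with values \<open>\<delta>\<^sub>i\<^sub>0, \<delta>\<^sub>i\<^sub>1, \<delta>\<^sub>i\<^sub>2\<close> at the vertices 4, 5, 6.\<close>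

definition cube_basis :: "nat \<Rightarrow> nat \<Rightarrow> 'a::comm_ring_1" where
  "cube_basis i t = (if t = 4 + i then 1 else if t = 7 then -1 else 0)"

lemma antipodal_ext_cube_basis_expansion:
  fixes \<beta> :: "nat \<Rightarrow> 'a::comm_ring_1"
  assumes \<beta>: "\<beta> 4 + \<beta> 5 + \<beta> 6 + \<beta> 7 = 0" and s: "s < 8"
  shows "antipodal_ext l \<beta> s = (\<Sum>i<3. \<beta> (4 + i) * antipodal_ext l (cube_basis i) s)"
proof -
  have \<beta>7: "\<beta> 7 = - \<beta> 4 - \<beta> 5 - \<beta> 6" using \<beta> by (simp add: algebra_simps eq_neg_iff_add_eq_0)
  have "s = 0 \<or> s = 1 \<or> s = 2 \<or> s = 3 \<or> s = 4 \<or> s = 5 \<or> s = 6 \<or> s = 7" using s by auto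
  thus ?thesis
    by (elim disjE) (simp_all add: antipodal_ext_def cube_basis_def numeral_3_eq_3 lessThan_Suc \<beta>7 algebra_simps)
qed

section \<open>Kernels and multiplicities\<close>

lemma char_matrix_mult_vec_index:
  assumes A: "A \<in> carrier_mat m m" and v: "v \<in> carrier_vec m" and u: "u < m"
  shows "(char_matrix A l *\<^sub>v v) $ u = (A *\<^sub>v v) $ u - l * v $ u"
proof -
  have "(char_matrix A l *\<^sub>v v) $ u = (\<Sum>w\<in>{0..<m}. A $$ (u, w) * v $ w - (if u = w then l * v $ w else 0))"
    using v u A unfolding char_matrix_def by (auto simp: scalar_prod_def left_diff_distrib intro!: sum.cong)
  also have "\<dots> = (A *\<^sub>v v) $ u - l * v $ u"
    using v u A by (simp add: scalar_prod_def sum_subtractf)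
  finally show ?thesis .
qed

lemma mat_kernel_char_matrix_iff:
  assumes A: "A \<in> carrier_mat m m"
  shows "v \<in> mat_kernel (char_matrix A l) \<longleftrightarrow> v \<in> carrier_vec m \<and> (\<forall>u<m. (A *\<^sub>v v) $ u = l * v $ u)"
proof -
  have dims: "dim_row (char_matrix A l) = m" "dim_col (char_matrix A l) = m"
    using char_matrix_closed[OF A, of l] by auto
  have "char_matrix A l *\<^sub>v v = 0\<^sub>v m \<longleftrightarrow> (\<forall>u<m. (A *\<^sub>v v) $ u = l * v $ u)" if "v \<in> carrier_vec m"
    using char_matrix_mult_vec_index[OF A that, of _ l] dims
    by (auto simp: vec_eq_iff simp del: index_mult_mat_vec)
  thus ?thesis using dims unfolding mat_kernel_def by auto
qed

lemma kernel_dim_coordinate_basis: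
  fixes B :: "'a::field mat"
  assumes B: "B \<in> carrier_mat m m"
    and b: "\<And>i. i < d \<Longrightarrow> b i \<in> mat_kernel B" and p: "\<And>j. j < d \<Longrightarrow> p j < m"
    and delta: "\<And>i j. i < d \<Longrightarrow> j < d \<Longrightarrow> b i $ p j = (if i = j then 1 else 0)"
    and expand: "\<And>v u. v \<in> mat_kernel B \<Longrightarrow> u < m \<Longrightarrow> v $ u = (\<Sum>i<d. v $ p i * b i $ u)"
  shows "kernel_dim B = d"
proof -
  interpret K: kernel m m B by unfold_locales (rule B)
  let ?X = "b ` {..<d}"
  have inj: "inj_on b {..<d}"
    by (rule inj_onI) (metis delta lessThan_iff one_neq_zero)
  have Xk: "?X \<subseteq> mat_kernel B" using b by auto
  have Xc: "?X \<subseteq> carrier_vec m" using Xk B unfolding mat_kernel_def by auto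
  have fX: "finite ?X" by simp
  have lincomb: "K.NC.lincomb a ?X $ u = (\<Sum>i<d. a (b i) * b i $ u)" if "u < m" for a u
    using K.NC.lincomb_index[OF that Xc] sum.reindex[OF inj] by simp
  have coord: "(\<Sum>i<d. a (b i) * b i $ p j) = a (b j)" if "j < d" for a j
  proof -
    have "(\<Sum>i<d. a (b i) * b i $ p j) = (\<Sum>i<d. if i = j then a (b i) else 0)"
      using that delta by (intro sum.cong) auto
    thus ?thesis using that by simp
  qed
  have "K.NC.lin_indpt ?X"
  proof (rule K.NC.finite_lin_indpt2[OF fX Xc])
    fix a assume "K.NC.lincomb a ?X = 0\<^sub>v m"
    hence "a (b j) = 0" if "j < d" for j
      using lincomb[OF p[OF that], of a] coord[OF that] p[OF that] by simp
    thus "\<forall>v\<in>?X. a v = 0" by auto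
  qed
  hence indpt: "K.Ker.lin_indpt ?X" using K.lindep_same[OF Xk] by simp
  have "mat_kernel B \<subseteq> K.span ?X"
  proof
    fix v assume v: "v \<in> mat_kernel B"
    define a where "a x = v $ p (the_inv_into {..<d} b x)" for x
    have "v = K.NC.lincomb a ?X"
    proof (rule eq_vecI)
      show "dim_vec v = dim_vec (K.NC.lincomb a ?X)"
        using v B K.NC.lincomb_dim[OF fX Xc] unfolding mat_kernel_def by simp
      fix u assume "u < dim_vec (K.NC.lincomb a ?X)"
      hence u: "u < m" using K.NC.lincomb_dim[OF fX Xc] by simp
      show "v $ u = K.NC.lincomb a ?X $ u"
        unfolding lincomb[OF u] expand[OF v u] a_def using inj by (simp add: the_inv_into_f_f)
    qed
    hence "v \<in> K.NC.span ?X" unfolding K.NC.finite_span[OF fX Xc] by auto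
    thus "v \<in> K.span ?X" using K.span_same[OF Xk] by simp
  qed
  hence "K.span ?X = mat_kernel B" using K.Ker.span_is_subset2[of ?X] Xk by auto
  hence "K.Ker.basis ?X" unfolding K.Ker.basis_def using indpt Xk by simp
  hence "K.dim = card ?X" using K.Ker.dim_basis[OF fX] by simp
  thus ?thesis using card_image[OF inj] by simp
qed

text \<open>For Hermitian B, \<open>B v = 0\<close> with \<open>v = B w\<close> gives \<open>\<langle>v, v\<rangle> = \<langle>w, B v\<rangle> = 0\<close>.\<close>

lemma hermitian_mat_kernel_mult_self:
  fixes B :: "'a::conjugatable_ordered_field mat"
  assumes B: "B \<in> carrier_mat m m"
    and herm: "\<And>i j. i < m \<Longrightarrow> j < m \<Longrightarrow> conjugate (B $$ (i, j)) = B $$ (j, i)"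
  shows "mat_kernel (B * B) = mat_kernel B"
proof
  show "mat_kernel B \<subseteq> mat_kernel (B * B)"
    using B by (auto simp: mat_kernel_def assoc_mult_mat_vec[of B m m B m v for v, symmetric])
next
  show "mat_kernel (B * B) \<subseteq> mat_kernel B"
  proof
    fix w assume "w \<in> mat_kernel (B * B)"
    hence w: "w \<in> carrier_vec m" and BBw: "B *\<^sub>v (B *\<^sub>v w) = 0\<^sub>v m"
      using B by (auto simp: mat_kernel_def assoc_mult_mat_vec)
    let ?v = "B *\<^sub>v w"
    have "?v \<bullet>c ?v = (\<Sum>i<m. (\<Sum>j<m. B $$ (i, j) * w $ j) * conjugate (?v $ i))"
      using B w by (simp add: scalar_prod_def lessThan_atLeast0)
    also have "\<dots> = (\<Sum>i<m. \<Sum>j<m. w $ j * conjugate (B $$ (j, i) * ?v $ i))"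
      by (auto simp: sum_distrib_left sum_distrib_right conjugate_dist_mul herm mult_ac intro!: sum.cong)
    also have "\<dots> = (\<Sum>j<m. \<Sum>i<m. w $ j * conjugate (B $$ (j, i) * ?v $ i))"
      by (rule sum.swap)
    also have "\<dots> = (\<Sum>j<m. w $ j * conjugate (\<Sum>i<m. B $$ (j, i) * ?v $ i))"
      by (simp add: sum_distrib_left sum_conjugate)
    also have "\<dots> = 0"
      using BBw B w by (simp add: scalar_prod_def lessThan_atLeast0 vec_eq_iff)
    finally have "?v \<bullet>c ?v = 0" .
    hence "?v = 0\<^sub>v m" using conjugate_square_eq_0_vec[OF mult_mat_vec_carrier[OF B w]] by simp
    thus "w \<in> mat_kernel B" using B w unfolding mat_kernel_def by auto
  qed
qed

lemma sum_list_eq_if_min_two_eq_min_one: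
  "0 \<notin> set ys \<Longrightarrow> sum_list (map (min (2::nat)) ys) = sum_list (map (min 1) ys) \<Longrightarrow>
    sum_list ys = sum_list (map (min 1) ys)"
proof (induct ys)
  case (Cons y ys)
  have "sum_list (map (min (1::nat)) ys) \<le> sum_list (map (min 2) ys)" by (induct ys) auto
  hence "y = 1" using Cons.prems by (cases "y \<ge> 2") auto
  thus ?case using Cons by auto
qed simp

text \<open>Hermitian matrices have no Jordan blocks of size at least two, so algebraic and geometric
multiplicities agree.\<close>

lemma order_char_poly_hermitian:
  fixes A :: "complex mat"
  assumes A: "A \<in> carrier_mat m m"
    and herm: "\<And>i j. i < m \<Longrightarrow> j < m \<Longrightarrow> cnj (A $$ (i, j)) = A $$ (j, i)" and l: "cnj l = l"
  shows "order l (char_poly A) = kernel_dim (char_matrix A l)"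
proof -
  let ?B = "char_matrix A l"
  have B: "?B \<in> carrier_mat m m" using A by simp
  have "conjugate (?B $$ (i, j)) = ?B $$ (j, i)" if "i < m" "j < m" for i j
    using A herm[OF that] l that unfolding char_matrix_def by auto
  hence "mat_kernel (?B * ?B) = mat_kernel ?B" by (rule hermitian_mat_kernel_mult_self[OF B])
  hence dim2: "dim_gen_eigenspace A l 2 = dim_gen_eigenspace A l 1"
    unfolding dim_gen_eigenspace_def kernel_dim_def using B by (simp add: numeral_2_eq_2)
  obtain as where "char_poly A = (\<Prod>a\<leftarrow>as. [:- a, 1:])" using char_poly_factorized[OF A] by blast
  then obtain n_as where jnf: "jordan_nf A n_as" using jordan_nf_exists[OF A] by blast
  let ?ys = "map fst (filter (\<lambda>na. snd na = l) n_as)"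
  have filter: "[(m, e)\<leftarrow>n_as . e = l] = filter (\<lambda>na. snd na = l) n_as" by (induct n_as) auto
  have "0 \<notin> set ?ys" using jnf unfolding jordan_nf_def by force
  hence "sum_list ?ys = dim_gen_eigenspace A l 1"
    using sum_list_eq_if_min_two_eq_min_one dim_gen_eigenspace[OF jnf, of l 1]
      dim_gen_eigenspace[OF jnf, of l 2] dim2 filter by simp
  thus ?thesis using jordan_nf_order[OF jnf, of l] B unfolding dim_gen_eigenspace_def by simp
qed

lemma order_map_poly_of_real:
  fixes p :: "real poly"
  assumes p: "p \<noteq> 0"
  shows "order (complex_of_real a) (map_poly complex_of_real p) = order a p"
proof -
  interpret M: map_poly_inj_idom_hom complex_of_real by unfold_locales
  obtain q where pq: "p = [:-a, 1:] ^ order a p * q" and "\<not> [:-a, 1:] dvd q"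
    using order_decomp[OF p] by blast
  hence "poly (map_poly complex_of_real q) (complex_of_real a) \<noteq> 0" by (simp add: poly_eq_0_iff_dvd)
  moreover have mp: "map_poly complex_of_real p = [:- complex_of_real a, 1:] ^ order a p * map_poly complex_of_real q"
    by (subst pq) (simp only: M.hom_mult M.hom_power, simp)
  moreover have "map_poly complex_of_real p \<noteq> 0" using p by simp
  ultimately show ?thesis by (simp add: order_mult order_power_n_n order_0I)
qed

section \<open>The spectrum\<close>

lemma sum_lessThan_mult_blocks: "(\<Sum>z<m * n. f z) = (\<Sum>t<m. \<Sum>q<n. f (t * n + (q::nat)))"
proof -
  have "(\<Sum>z<m * n. f z) = (\<Sum>t<m. sum f {t * n..<t * n + n})" using sum.nat_group[of f n m] by simp
  also have "\<dots> = (\<Sum>t<m. \<Sum>q<n. f (t * n + q))"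
  proof (rule sum.cong[OF refl])
    fix t
    have "sum f {t * n..<t * n + n} = (\<Sum>q = 0..<n. f (q + t * n))"
      using sum.shift_bounds_nat_ivl[of f 0 "t * n" n] by (simp add: add.commute)
    thus "sum f {t * n..<t * n + n} = (\<Sum>q<n. f (t * n + q))" by (simp add: add.commute lessThan_atLeast0)
  qed
  finally show ?thesis .
qed

lemma dvd_diff_iff_eq_nat_mod:
  assumes "q < n"
  shows "int n dvd a - int q \<longleftrightarrow> q = nat (a mod int n)"
proof -
  have "int n dvd a - int q \<longleftrightarrow> a mod int n = int q mod int n" by (simp add: mod_eq_dvd_iff)
  also have "\<dots> \<longleftrightarrow> q = nat (a mod int n)" using assms by (auto simp flip: of_nat_mod)
  finally show ?thesis .
qed

locale cube_cover_spectrum = ncycle +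
  fixes k :: nat
  assumes dvd_k: "int n dvd int k^2 + int k + 1"
begin

abbreviation A :: "real mat" where "A \<equiv> bip_adj n (N_mat n (perm_mat n \<sigma>) k)"

abbreviation Ac :: "complex mat" where "Ac \<equiv> map_mat complex_of_real A"

lemma A_carrier: "A \<in> carrier_mat (8 * n) (8 * n)"
  unfolding carrier_mat_def bip_adj_def by simp

lemma Ac_carrier: "Ac \<in> carrier_mat (8 * n) (8 * n)"
  using A_carrier by simp

lemma A_sym: "i < 8 * n \<Longrightarrow> j < 8 * n \<Longrightarrow> A $$ (j, i) = A $$ (i, j)"
  using transpose_bip_adj[of "N_mat n (perm_mat n \<sigma>) k" n] A_carrier
  by (metis N_mat_dims carrier_matD carrier_matI index_transpose_mat(1))

definition fibre :: "complex vec \<Rightarrow> nat \<Rightarrow> int \<Rightarrow> complex" where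
  "fibre v s j = v $ unlabel (s * n + nat (j mod int n))"

lemma unlabel_block_lessThan: "s < 8 \<Longrightarrow> x < n \<Longrightarrow> unlabel (s * n + x) < 8 * n"
  using unlabel_lessThan block_add_less_iff by blast

lemma mult_vec_unlabel_index:
  assumes v: "v \<in> carrier_vec (8 * n)" and s: "s < 8" and x: "x < n"
  shows "(Ac *\<^sub>v v) $ unlabel (s * n + x) =
    (\<Sum>t<8. if cube_adj s t then fibre v t (int x + cube_voltage k s t) else 0)"
proof -
  let ?u = "unlabel (s * n + x)" and ?adj = "cube_cover n k (s * n + x)"
  have u: "?u < 8 * n" by (rule unlabel_block_lessThan[OF s x])
  have "(Ac *\<^sub>v v) $ ?u = (\<Sum>w<8 * n. Ac $$ (?u, w) * v $ w)"
    using u v Ac_carrier by (simp add: scalar_prod_def lessThan_atLeast0)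
  also have "\<dots> = (\<Sum>w<8 * n. if ?adj (relabel w) then v $ w else 0)"
    using u A_carrier by (intro sum.cong) (auto simp: bip_adj_index relabel_unlabel)
  also have "\<dots> = (\<Sum>z<8 * n. if ?adj z then v $ unlabel z else 0)"
    using sum.reindex_bij_betw[OF bij_betw_unlabel, of "\<lambda>w. if ?adj (relabel w) then v $ w else 0"]
    by (simp add: relabel_unlabel)
  also have "\<dots> = (\<Sum>t<8. \<Sum>q<n. if ?adj (t * n + q) then v $ unlabel (t * n + q) else 0)"
    by (rule sum_lessThan_mult_blocks)
  also have "\<dots> = (\<Sum>t<8. if cube_adj s t then fibre v t (int x + cube_voltage k s t) else 0)"
  proof (rule sum.cong[OF refl])
    fix t
    let ?q = "nat ((int x + cube_voltage k s t) mod int n)"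
    have "?q < n" using n_pos by (simp add: nat_less_iff)
    have "?adj (t * n + q) \<longleftrightarrow> cube_adj s t \<and> q = ?q" if "q < n" for q
      unfolding cyclic_cover_def using x that dvd_diff_iff_eq_nat_mod[OF that] by simp
    hence "(\<Sum>q<n. if ?adj (t * n + q) then v $ unlabel (t * n + q) else 0)
        = (\<Sum>q<n. if cube_adj s t \<and> q = ?q then v $ unlabel (t * n + q) else 0)"
      by (intro sum.cong) auto
    also have "\<dots> = (if cube_adj s t then fibre v t (int x + cube_voltage k s t) else 0)"
      using \<open>?q < n\<close> unfolding fibre_def by (simp add: sum.delta)
    finally show "(\<Sum>q<n. if ?adj (t * n + q) then v $ unlabel (t * n + q) else 0)
        = (if cube_adj s t then fibre v t (int x + cube_voltage k s t) else 0)" .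
  qed
  finally show ?thesis .
qed

lemma fibre_eigen_eq:
  assumes v: "v \<in> mat_kernel (char_matrix Ac l)" and s: "s < 8"
  shows "l * fibre v s j = (\<Sum>t<8. if cube_adj s t then fibre v t (j + cube_voltage k s t) else 0)"
proof -
  define x where "x = nat (j mod int n)"
  have x: "x < n" and jx: "int x = j mod int n" unfolding x_def using n_pos by (auto simp: nat_less_iff)
  have vc: "v \<in> carrier_vec (8 * n)" and eig: "\<forall>u<8 * n. (Ac *\<^sub>v v) $ u = l * v $ u"
    using v mat_kernel_char_matrix_iff[OF Ac_carrier] by auto
  have "l * fibre v s j = (Ac *\<^sub>v v) $ unlabel (s * n + x)"
    unfolding fibre_def x_def[symmetric] using eig unlabel_block_lessThan[OF s x] by simp
  also have "\<dots> = (\<Sum>t<8. if cube_adj s t then fibre v t (int x + cube_voltage k s t) else 0)"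
    by (rule mult_vec_unlabel_index[OF vc s x])
  also have "\<dots> = (\<Sum>t<8. if cube_adj s t then fibre v t (j + cube_voltage k s t) else 0)"
    unfolding fibre_def jx mod_add_left_eq ..
  finally show ?thesis .
qed

lemma fibre_const:
  assumes v: "v \<in> mat_kernel (char_matrix Ac l)" and l: "l = 1 \<or> l = -1" and s: "s < 8"
  shows "fibre v s j = fibre v s 0"
  by (rule cube_cover_fibres_const[where F = "fibre v", OF n_pos dvd_k l _ fibre_eigen_eq[OF v] s])
    (simp add: fibre_def)

lemma kernel_index_fibre:
  assumes v: "v \<in> mat_kernel (char_matrix Ac l)" and l: "l = 1 \<or> l = -1" and u: "u < 8 * n"
  shows "v $ u = fibre v (u div n) 0"
proof -
  have "v $ u = fibre v (u div n) (int (orbit_idx (u mod n)))"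
    unfolding fibre_def using unlabel_relabel[of u] orbit_idx_lessThan[of "u mod n"] n_pos
    by (simp add: relabel_def flip: of_nat_mod)
  also have "\<dots> = fibre v (u div n) 0"
    using fibre_const[OF v l] less_mult_imp_div_less[OF u] by blast
  finally show ?thesis .
qed

definition cube_lift_vec :: "complex \<Rightarrow> (nat \<Rightarrow> complex) \<Rightarrow> complex vec" where
  "cube_lift_vec l \<beta> = vec (8 * n) (\<lambda>u. antipodal_ext l \<beta> (u div n))"

lemma fibre_cube_lift_vec: "t < 8 \<Longrightarrow> fibre (cube_lift_vec l \<beta>) t j = antipodal_ext l \<beta> t"
  unfolding fibre_def cube_lift_vec_def
  using unlabel_block_lessThan[of t "nat (j mod int n)"] unlabel_div_mod(1)[of "t * n + nat (j mod int n)"] n_pos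
  by (simp add: nat_less_iff)

lemma cube_lift_vec_kernel:
  assumes l: "l = 1 \<or> l = -1" and \<beta>: "\<beta> 4 + \<beta> 5 + \<beta> 6 + \<beta> 7 = 0"
  shows "cube_lift_vec l \<beta> \<in> mat_kernel (char_matrix Ac l)"
  unfolding mat_kernel_char_matrix_iff[OF Ac_carrier]
proof (intro conjI allI impI)
  show vc: "cube_lift_vec l \<beta> \<in> carrier_vec (8 * n)" unfolding cube_lift_vec_def by simp
  fix u assume u: "u < 8 * n"
  define s x where "s = u div n" and "x = orbit_idx (u mod n)"
  have s: "s < 8" and x: "x < n" unfolding s_def x_def using u n_pos
    by (auto intro: less_mult_imp_div_less orbit_idx_lessThan)
  have u_eq: "unlabel (s * n + x) = u" using unlabel_relabel[of u] unfolding s_def x_def relabel_def .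
  have "(Ac *\<^sub>v cube_lift_vec l \<beta>) $ u = (\<Sum>t<8. if cube_adj s t then antipodal_ext l \<beta> t else 0)"
    unfolding mult_vec_unlabel_index[OF vc s x, unfolded u_eq] by (intro sum.cong) (auto simp: fibre_cube_lift_vec)
  also have "\<dots> = l * antipodal_ext l \<beta> s" by (rule cube_eigen_antipodal_ext[OF l \<beta> s])
  also have "\<dots> = l * cube_lift_vec l \<beta> $ u" unfolding cube_lift_vec_def s_def using u by simp
  finally show "(Ac *\<^sub>v cube_lift_vec l \<beta>) $ u = l * cube_lift_vec l \<beta> $ u" .
qed

lemma kernel_expansion:
  assumes v: "v \<in> mat_kernel (char_matrix Ac l)" and l: "l = 1 \<or> l = -1" and u: "u < 8 * n"
  shows "v $ u = (\<Sum>i<3. v $ ((4 + i) * n) * cube_lift_vec l (cube_basis i) $ u)"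
proof -
  let ?c = "\<lambda>s. fibre v s 0"
  have eig: "l * ?c s = (\<Sum>t<8. if cube_adj s t then ?c t else 0)" if "s < 8" for s
  proof -
    have "l * ?c s = (\<Sum>t<8. if cube_adj s t then fibre v t (0 + cube_voltage k s t) else 0)"
      by (rule fibre_eigen_eq[OF v that])
    also have "\<dots> = (\<Sum>t<8. if cube_adj s t then ?c t else 0)"
    proof (rule sum.cong[OF refl])
      fix t :: nat assume "t \<in> {..<8}"
      thus "(if cube_adj s t then fibre v t (0 + cube_voltage k s t) else 0) = (if cube_adj s t then ?c t else 0)"
        using fibre_const[OF v l, of t "0 + cube_voltage k s t"] by simp
    qed
    finally show ?thesis .
  qed
  note c = antipodal_ext_if_cube_eigen[OF l eig]
  have s: "u div n < 8" using less_mult_imp_div_less[OF u] .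
  have "v $ u = antipodal_ext l ?c (u div n)" using kernel_index_fibre[OF v l u] c(2)[of "u div n"] s by simp
  also have "\<dots> = (\<Sum>i<3. ?c (4 + i) * antipodal_ext l (cube_basis i) (u div n))"
    by (rule antipodal_ext_cube_basis_expansion[OF c(1) s])
  also have "\<dots> = (\<Sum>i<3. v $ ((4 + i) * n) * cube_lift_vec l (cube_basis i) $ u)"
  proof (rule sum.cong[OF refl])
    fix i :: nat assume "i \<in> {..<3}"
    hence "v $ ((4 + i) * n) = ?c (4 + i)" using kernel_index_fibre[OF v l, of "(4 + i) * n"] n_pos by simp
    thus "?c (4 + i) * antipodal_ext l (cube_basis i) (u div n) = v $ ((4 + i) * n) * cube_lift_vec l (cube_basis i) $ u"
      using u by (simp add: cube_lift_vec_def)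
  qed
  finally show ?thesis .
qed

lemma kernel_dim_char_matrix:
  assumes l: "l = 1 \<or> l = -1"
  shows "kernel_dim (char_matrix Ac l) = 3"
proof (rule kernel_dim_coordinate_basis[where b = "\<lambda>i. cube_lift_vec l (cube_basis i)" and p = "\<lambda>j. (4 + j) * n"])
  show "char_matrix Ac l \<in> carrier_mat (8 * n) (8 * n)" using Ac_carrier by simp
  show "cube_lift_vec l (cube_basis i) \<in> mat_kernel (char_matrix Ac l)" if "i < 3" for i
    using that by (intro cube_lift_vec_kernel[OF l]) (auto simp: cube_basis_def)
  show "(4 + j) * n < 8 * n" if "j < 3" for j using that n_pos by simp
  show "cube_lift_vec l (cube_basis i) $ ((4 + j) * n) = (if i = j then 1 else 0)" if "i < 3" "j < 3" for i j
    using that n_pos unfolding cube_lift_vec_def antipodal_ext_def cube_basis_def by simp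
qed (rule kernel_expansion[OF _ l])

lemma order_char_poly_A:
  assumes r: "r = 1 \<or> r = -1"
  shows "order r (char_poly A) = 3"
proof -
  have "char_poly Ac = map_poly complex_of_real (char_poly A)"
    by (rule of_real_hom.char_poly_hom[OF A_carrier])
  moreover have "char_poly A \<noteq> 0" using degree_monic_char_poly[OF A_carrier] by auto
  ultimately have "order r (char_poly A) = order (complex_of_real r) (char_poly Ac)"
    by (simp add: order_map_poly_of_real)
  also have "\<dots> = kernel_dim (char_matrix Ac (complex_of_real r))"
    by (rule order_char_poly_hermitian[OF Ac_carrier]) (use A_carrier A_sym in auto)
  also have "\<dots> = 3" using kernel_dim_char_matrix r by auto
  finally show ?thesis .
qed

end

theorem proposition6p1:
  fixes n k :: nat and \<sigma> :: "nat \<Rightarrow> nat"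
  assumes "n \<ge> 1" and "k \<le> n - 1" and "n dvd k^2 + k + 1"
    and "is_ncycle n \<sigma>"
  defines "A \<equiv> bip_adj n (N_mat n (perm_mat n \<sigma>) k)"
  shows "arc_transitive (8*n) (mat_graph A)
    \<and> order 1 (char_poly A) = 3 \<and> order (-1) (char_poly A) = 3"
proof -
  have h: "int n dvd int k^2 + int k + 1" using assms(3) by (metis of_nat_dvd_iff of_nat_1 of_nat_add of_nat_power)
  interpret cube_cover_spectrum n \<sigma> k by unfold_locales (use assms(1,4) h in auto)
  show ?thesis unfolding A_def using arc_transitive_bip_adj[OF h] order_char_poly_A by simp
qed

end
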